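(* Let $B_J\in\mathbb R^{n\times n}$ satisfy $B_J\ge O$ elementwise and $\rho(B_J)>0$. Let $\mathcal B=(B_1,\dots,B_d)$ and $\mathcal B'=(B'_1,\dots,B'_{d+1})$ be splittings of $B_J$ of orders $d\ge1$ and $d+1$ (for $d=1$, $\mathcal B=(B_J)$), and suppose there exist integers $0\le r\le d-1$, $0\le s\le d$ such that, with $(C_1,\dots,C_d)=\mathcal S^r(\mathcal B)$ and $(C'_1,\dots,C'_{d+1})=\mathcal S^s(\mathcal B')$, (I) $C'_p=C_p$ for $p=1,\dots,d-1$ and (II) $(C'_d,C'_{d+1})$ is a splitting of $C_d$ (no assumption on $C'_{d+1}C'_d$). Then: (b1) if $\rho(B_J)<1$ then $\rho(T(\mathcal B'))\le\rho(T(\mathcal B))\le\rho(B_J)$; (b2) if $\rho(B_J)=1$ then $\rho(T(\mathcal B'))=\rho(T(\mathcal B))=1$; (b3) if $\rho(B_J)>1$ then $\rho(T(\mathcal B'))\ge\rho(T(\mathcal B))\ge\rho(B_J)$.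
   Context: For $B\in\mathbb R^{n\times n}$, a splitting of $B$ of order $d\ge1$ is an ordered $d$-tuple $\mathcal B=(B_1,\dots,B_d)$ of real $n\times n$ matrices with $B_p\neq O$ for all $p$, $\sum_{p=1}^d B_p=B$, and $B_p\circ B_q=O$ (Hadamard product) for $p\ne q$. The iteration matrix of $\mathcal B$ is the $dn\times dn$ matrix $T(\mathcal B)=(I_{dn}-\mathcal L)^{-1}\mathcal U$, where $\mathcal L,\mathcal U$ are $d\times d$ block matrices with $n\times n$ blocks, $\mathcal L_{ij}=B_j$ if $i>j$ and $O$ otherwise, $\mathcal U_{ij}=B_j$ if $i\le j$ and $O$ otherwise (so $T((B_J))=B_J$). The cyclic shift is $\mathcal S(B_1,\dots,B_d)=(B_d,B_1,\dots,B_{d-1})$ and $\mathcal S^r$ is its $r$-fold iterate. $\rho$ denotes spectral radius. *)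

theory Defs
  imports "Jordan_Normal_Form.Spectral_Radius" "Jordan_Normal_Form.Gauss_Jordan_Elimination"
begin

text \<open>Matrices are JNF matrices of type real mat with explicit dimensions.
  An ordered d-tuple of n x n matrices is a list of length d (0-indexed).\<close>

definition mat_sum_list :: "nat \<Rightarrow> real mat list \<Rightarrow> real mat" where
  "mat_sum_list n Bs = foldr (+) Bs (0\<^sub>m n n)"

definition is_splitting :: "nat \<Rightarrow> nat \<Rightarrow> real mat \<Rightarrow> real mat list \<Rightarrow> bool" where
  "is_splitting n d B Bs \<longleftrightarrow>
     d \<ge> 1 \<and> length Bs = d \<and>
     (\<forall>p<d. Bs ! p \<in> carrier_mat n n \<and> Bs ! p \<noteq> 0\<^sub>m n n) \<and>
     mat_sum_list n Bs = B \<and>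
     (\<forall>p<d. \<forall>q<d. p \<noteq> q \<longrightarrow>
        (\<forall>i<n. \<forall>j<n. (Bs ! p) $$ (i, j) * (Bs ! q) $$ (i, j) = 0))"

definition block_L :: "nat \<Rightarrow> real mat list \<Rightarrow> real mat" where
  "block_L n Bs = (let d = length Bs in
     mat (d * n) (d * n) (\<lambda>(i, j).
       if i div n > j div n then (Bs ! (j div n)) $$ (i mod n, j mod n) else 0))"

definition block_U :: "nat \<Rightarrow> real mat list \<Rightarrow> real mat" where
  "block_U n Bs = (let d = length Bs in
     mat (d * n) (d * n) (\<lambda>(i, j).
       if i div n \<le> j div n then (Bs ! (j div n)) $$ (i mod n, j mod n) else 0))"

definition iteration_matrix :: "nat \<Rightarrow> real mat list \<Rightarrow> real mat" where
  "iteration_matrix n Bs = (let d = length Bs in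
     the (mat_inverse (1\<^sub>m (d * n) - block_L n Bs)) * block_U n Bs)"

definition real_spectral_radius :: "real mat \<Rightarrow> real" where
  "real_spectral_radius A = spectral_radius (map_mat complex_of_real A)"

definition cyc_shift :: "'a list \<Rightarrow> 'a list" where
  "cyc_shift xs = (if xs = [] then [] else last xs # butlast xs)"

definition nonneg_mat :: "real mat \<Rightarrow> bool" where
  "nonneg_mat A \<longleftrightarrow> (\<forall>i<dim_row A. \<forall>j<dim_col A. A $$ (i, j) \<ge> 0)"

end

theory Submission
  imports Defs
begin

text \<open>For nonnegative parts \<open>B\<^sub>1, \<dots>, B\<^sub>d\<close> and \<open>c > 0\<close>, a Collatz--Wielandt argument shows
  \<open>\<rho>(T) < c\<close> exactly when some positive block vector \<open>y\<close> satisfies \<open>(c L + U) y < c y\<close>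
  componentwise: \<open>c y - T y\<close> and \<open>(c (I - L) - U) y\<close> correspond under the nonnegative matrix
  \<open>(I - L)\<^sup>-\<^sup>1\<close>. This block condition survives a cyclic shift of the parts (rescale the block
  that moves to the front by \<open>1 / c\<close>), so \<open>\<rho>(T)\<close> is shift invariant, and it compares
  monotonically in the parts. For \<open>c \<le> 1\<close> a subinvariant vector of \<open>B\<^sub>J\<close> yields one for
  \<open>c L + U\<close>, and splitting the last part in two preserves the condition; for \<open>c \<ge> 1\<close> both
  implications reverse. Letting \<open>c\<close> range over thresholds below or above \<open>1\<close> gives the
  inequalities; at \<open>\<rho>(B\<^sub>J) = 1\<close> the geometric test vector \<open>(c\<^bsup>q/d\<^esup> x)\<^sub>q\<close> built from
  a subinvariant vector \<open>x\<close> of \<open>B\<^sub>J\<close> gives the missing bound \<open>\<rho>(T) \<le> 1\<close>.\<close>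

section \<open>Nonnegative matrices and their spectral radius\<close>

text \<open>Vectors are functions on indices; only the entries below the dimension are ever read.\<close>

definition matvec :: "real mat \<Rightarrow> (nat \<Rightarrow> real) \<Rightarrow> nat \<Rightarrow> real" where
  "matvec M x i = (\<Sum>j<dim_col M. M $$ (i, j) * x j)"

lemma matvec_cong: "(\<And>j. j < dim_col M \<Longrightarrow> x j = y j) \<Longrightarrow> matvec M x i = matvec M y i"
  unfolding matvec_def by (intro sum.cong) auto

lemma matvec_scale: "matvec M (\<lambda>j. s * x j) i = s * matvec M x i"
  unfolding matvec_def by (simp add: sum_distrib_left mult_ac)

lemma matvec_scale_diff: "matvec M (\<lambda>j. s * x j - y j) i = s * matvec M x i - matvec M y i"
  unfolding matvec_def by (simp add: algebra_simps sum_subtractf sum_distrib_left)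

lemma matvec_nonneg:
  assumes "nonneg_mat M" "i < dim_row M" "\<And>j. j < dim_col M \<Longrightarrow> x j \<ge> 0"
  shows "matvec M x i \<ge> 0"
  using assms unfolding matvec_def nonneg_mat_def by (intro sum_nonneg mult_nonneg_nonneg) auto

lemma matvec_mono:
  assumes "nonneg_mat M" "i < dim_row M" "\<And>j. j < dim_col M \<Longrightarrow> x j \<le> y j"
  shows "matvec M x i \<le> matvec M y i"
  using assms unfolding matvec_def nonneg_mat_def by (intro sum_mono mult_left_mono) auto

lemma matvec_mult:
  assumes "A \<in> carrier_mat n m" "B \<in> carrier_mat m p" "i < n"
  shows "matvec (A * B) x i = matvec A (matvec B x) i"
proof -
  have "matvec (A * B) x i = (\<Sum>j<p. (\<Sum>k<m. A $$ (i, k) * B $$ (k, j)) * x j)"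
    unfolding matvec_def using assms
    by (auto simp: scalar_prod_def atLeast0LessThan intro!: sum.cong)
  also have "\<dots> = (\<Sum>k<m. A $$ (i, k) * (\<Sum>j<p. B $$ (k, j) * x j))"
    by (simp add: sum_distrib_left sum_distrib_right mult.assoc sum.swap[of _ "{..<p}"])
  finally show ?thesis unfolding matvec_def using assms by simp
qed

lemma matvec_one: "i < n \<Longrightarrow> matvec (1\<^sub>m n) x i = x i"
  unfolding matvec_def by (simp add: if_distrib[of "\<lambda>a. a * _"] cong: if_cong)

lemma matvec_one_minus:
  assumes "L \<in> carrier_mat n n" "i < n"
  shows "matvec (1\<^sub>m n - L) x i = x i - matvec L x i"
proof -
  have "matvec (1\<^sub>m n - L) x i = (\<Sum>j<n. (if j = i then x j else 0) - L $$ (i, j) * x j)"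
    unfolding matvec_def using assms by (intro sum.cong) (auto simp: algebra_simps)
  thus ?thesis unfolding matvec_def sum_subtractf using assms by simp
qed

lemma nonneg_mat_mult:
  assumes "A \<in> carrier_mat n m" "B \<in> carrier_mat m p" "nonneg_mat A" "nonneg_mat B"
  shows "nonneg_mat (A * B)"
  using assms unfolding nonneg_mat_def
  by (auto simp: scalar_prod_def intro!: sum_nonneg mult_nonneg_nonneg)

lemma nonneg_mat_power:
  assumes "A \<in> carrier_mat n n" "nonneg_mat A"
  shows "nonneg_mat (A ^\<^sub>m k)"
proof (induction k)
  case 0
  show ?case using assms by (auto simp: nonneg_mat_def)
next
  case (Suc k)
  have "A ^\<^sub>m k \<in> carrier_mat n n" using assms(1) by simp
  from nonneg_mat_mult[OF this assms(1) Suc assms(2)] show ?case by simp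
qed

lemma smult_pow_mat:
  fixes A :: "'a :: comm_ring_1 mat"
  assumes "A \<in> carrier_mat n n"
  shows "(a \<cdot>\<^sub>m A) ^\<^sub>m k = (a ^ k) \<cdot>\<^sub>m (A ^\<^sub>m k)"
proof (induction k)
  case (Suc k)
  have Ak: "A ^\<^sub>m k \<in> carrier_mat n n" using assms by simp
  have "(a \<cdot>\<^sub>m A) ^\<^sub>m Suc k = (a ^ k) \<cdot>\<^sub>m (A ^\<^sub>m k) * (a \<cdot>\<^sub>m A)" using Suc by simp
  also have "\<dots> = (a ^ k) \<cdot>\<^sub>m (a \<cdot>\<^sub>m (A ^\<^sub>m k * A))"
    using mult_smult_assoc_mat[OF Ak smult_carrier_mat[OF assms]] mult_smult_distrib[OF Ak assms]
    by simp
  finally show ?case by (auto intro!: eq_matI)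
qed (use assms in \<open>auto intro!: eq_matI\<close>)

lemma eigenvalue_abs_le_real_spectral_radius:
  assumes A: "A \<in> carrier_mat n n" and ev: "eigenvalue A \<mu>"
  shows "\<bar>\<mu>\<bar> \<le> real_spectral_radius A"
proof -
  have CA: "map_mat complex_of_real A \<in> carrier_mat n n" using A by simp
  have "complex_of_real \<mu> \<in> spectrum (map_mat complex_of_real A)"
    using of_real_hom.eigenvalue_hom[OF A ev] unfolding spectrum_def by simp
  from spectral_radius_mem_max(2)[OF CA eigenvalue_imp_nonzero_dim[OF A ev] imageI[OF this]]
  show ?thesis unfolding real_spectral_radius_def by simp
qed

lemma real_spectral_radius_nonneg:
  assumes "A \<in> carrier_mat n n" "n > 0"
  shows "real_spectral_radius A \<ge> 0"
  using spectral_radius_mem_max(1)[of "map_mat complex_of_real A" n] assms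
  unfolding real_spectral_radius_def by auto

lemma real_spectral_radius_smult_le:
  assumes A: "A \<in> carrier_mat n n" and n: "n > 0" and a: "a > 0"
  shows "real_spectral_radius (a \<cdot>\<^sub>m A) \<le> a * real_spectral_radius A"
proof -
  let ?C = "map_mat complex_of_real"
  have CaA: "?C (a \<cdot>\<^sub>m A) \<in> carrier_mat n n" and CA: "?C A \<in> carrier_mat n n" using A by auto
  obtain \<mu> where "\<mu> \<in> spectrum (?C (a \<cdot>\<^sub>m A))" and rho: "spectral_radius (?C (a \<cdot>\<^sub>m A)) = cmod \<mu>"
    using spectral_radius_mem_max(1)[OF CaA n] by auto
  then obtain v where v: "eigenvector (?C (a \<cdot>\<^sub>m A)) v \<mu>"
    unfolding spectrum_def eigenvalue_def by auto
  have vdim: "v \<in> carrier_vec n" using v A unfolding eigenvector_def by auto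
  have "?C A *\<^sub>v v = (\<mu> / a) \<cdot>\<^sub>v v"
  proof (rule eq_vecI)
    fix i assume "i < dim_vec ((\<mu> / a) \<cdot>\<^sub>v v)"
    hence i: "i < n" using vdim by simp
    have "complex_of_real a * (?C A *\<^sub>v v) $ i = (?C (a \<cdot>\<^sub>m A) *\<^sub>v v) $ i"
      using A i vdim by (simp add: scalar_prod_def sum_distrib_left mult.assoc)
    also have "\<dots> = \<mu> * v $ i" using v i vdim unfolding eigenvector_def by simp
    finally show "(?C A *\<^sub>v v) $ i = ((\<mu> / a) \<cdot>\<^sub>v v) $ i"
      using a i vdim by (simp add: field_simps)
  qed (use A vdim in simp)
  hence "eigenvector (?C A) v (\<mu> / a)" using v A unfolding eigenvector_def by simp
  hence "cmod (\<mu> / a) \<le> spectral_radius (?C A)"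
    using spectral_radius_mem_max(2)[OF CA n] unfolding spectrum_def eigenvalue_def by blast
  thus ?thesis using rho a unfolding real_spectral_radius_def by (simp add: norm_divide field_simps)
qed

text \<open>An eigenvector for the spectral radius is compared with the test vector at an index where
  the ratio of their entries is maximal.\<close>

lemma spectral_radius_less_if_subinvariant:
  assumes A: "A \<in> carrier_mat N N" and nn: "nonneg_mat A" and N: "N > 0"
    and xpos: "\<And>i. i < N \<Longrightarrow> x i > 0"
    and sub: "\<And>i. i < N \<Longrightarrow> matvec A x i < c * x i"
  shows "real_spectral_radius A < c"
proof -
  let ?CA = "map_mat complex_of_real A"
  have CA: "?CA \<in> carrier_mat N N" using A by auto
  obtain \<mu> where "\<mu> \<in> spectrum ?CA" and rho: "spectral_radius ?CA = cmod \<mu>"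
    using spectral_radius_mem_max(1)[OF CA N] by auto
  then obtain v where v: "eigenvector ?CA v \<mu>" unfolding spectrum_def eigenvalue_def by auto
  have vdim: "v \<in> carrier_vec N" using v A unfolding eigenvector_def by auto
  have ev: "(\<Sum>j<N. ?CA $$ (i, j) * v $ j) = \<mu> * v $ i" if "i < N" for i
    using v that vdim A unfolding eigenvector_def
    by (auto simp: scalar_prod_def atLeast0LessThan dest!: arg_cong[of _ _ "\<lambda>u. u $ i"])
  define f where "f i = cmod (v $ i) / x i" for i
  define m where "m = Max (f ` {..<N})"
  have "m \<in> f ` {..<N}" unfolding m_def using N by (intro Max_in) auto
  then obtain i0 where i0: "i0 < N" "f i0 = m" by auto
  have fm: "f j \<le> m" if "j < N" for j unfolding m_def using that by simp
  have vm: "cmod (v $ j) \<le> m * x j" if "j < N" for j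
    using fm[OF that] xpos[OF that] unfolding f_def by (simp add: divide_le_eq)
  obtain i1 where i1: "i1 < N" "v $ i1 \<noteq> 0"
    using v vdim unfolding eigenvector_def by (metis eq_vecI carrier_vecD index_zero_vec)
  have mpos: "m > 0" using fm[OF i1(1)] xpos[OF i1(1)] i1(2) unfolding f_def
    by (smt (verit) divide_pos_pos zero_less_norm_iff)
  have vi0: "cmod (v $ i0) = m * x i0"
    using i0 xpos[OF i0(1)] unfolding f_def by (simp add: field_simps)
  have "cmod \<mu> * cmod (v $ i0) = cmod (\<Sum>j<N. ?CA $$ (i0, j) * v $ j)"
    using ev[OF i0(1)] by (simp add: norm_mult)
  also have "\<dots> \<le> (\<Sum>j<N. cmod (?CA $$ (i0, j) * v $ j))" by (rule norm_sum)
  also have "\<dots> = (\<Sum>j<N. A $$ (i0, j) * cmod (v $ j))"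
    using A i0 nn unfolding nonneg_mat_def by (intro sum.cong) (auto simp: norm_mult)
  also have "\<dots> \<le> (\<Sum>j<N. A $$ (i0, j) * (m * x j))"
    using A i0 nn vm unfolding nonneg_mat_def by (intro sum_mono mult_left_mono) auto
  also have "\<dots> = m * matvec A x i0"
    unfolding matvec_def using A by (simp add: sum_distrib_left mult_ac)
  also have "\<dots> < m * (c * x i0)" using sub[OF i0(1)] mpos by simp
  finally have "cmod \<mu> * (m * x i0) < c * (m * x i0)" unfolding vi0 by (simp add: mult_ac)
  hence "cmod \<mu> < c" using mpos xpos[OF i0(1)] by simp
  thus ?thesis using rho unfolding real_spectral_radius_def by simp
qed

lemma matvec_power_tendsto_zero:
  assumes A: "A \<in> carrier_mat N N" and N: "N > 0" and rho: "real_spectral_radius A < 1"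
    and i: "i < N"
  shows "(\<lambda>k. matvec (A ^\<^sub>m k) x i) \<longlonglongrightarrow> 0"
proof -
  define q where "q = (real_spectral_radius A + 1) / 2"
  have q: "0 < q" "q < 1" "real_spectral_radius A < q"
    using rho real_spectral_radius_nonneg[OF A N] by (auto simp: q_def)
  define A' where "A' = (1 / q) \<cdot>\<^sub>m A"
  have A': "A' \<in> carrier_mat N N" using A by (simp add: A'_def)
  have "real_spectral_radius A' \<le> (1 / q) * real_spectral_radius A"
    unfolding A'_def by (rule real_spectral_radius_smult_le[OF A N]) (use q in simp)
  also have "\<dots> < 1" using q by (simp add: field_simps)
  finally obtain K where K: "\<And>k. norm_bound (map_mat complex_of_real A' ^\<^sub>m k) K"
    using spectral_radius_jnf_norm_bound_less_1_upper_triangular[of _ N] A'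
    unfolding real_spectral_radius_def by fastforce
  have entry: "\<bar>(A ^\<^sub>m k) $$ (i, j)\<bar> \<le> q ^ k * K" if j: "j < N" for k j
  proof -
    have "A = q \<cdot>\<^sub>m A'" using q A by (auto simp: A'_def intro!: eq_matI)
    hence "(A ^\<^sub>m k) $$ (i, j) = q ^ k * (A' ^\<^sub>m k) $$ (i, j)"
      using smult_pow_mat[OF A'] i j A' by simp
    moreover have "cmod ((map_mat complex_of_real A' ^\<^sub>m k) $$ (i, j)) \<le> K"
      using K[of k] i j A' unfolding norm_bound_def by simp
    hence "\<bar>(A' ^\<^sub>m k) $$ (i, j)\<bar> \<le> K"
      using i j A' by (simp add: of_real_hom.mat_hom_pow[OF A', symmetric])
    ultimately show ?thesis using q by (simp add: abs_mult)
  qed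
  have bound: "norm (matvec (A ^\<^sub>m k) x i) \<le> norm (q ^ k) * (K * (\<Sum>j<N. \<bar>x j\<bar>))" for k
  proof -
    have "norm (matvec (A ^\<^sub>m k) x i) \<le> (\<Sum>j<N. \<bar>(A ^\<^sub>m k) $$ (i, j) * x j\<bar>)"
      unfolding matvec_def using A by (simp add: sum_abs del: pow_mat.simps)
    also have "\<dots> = (\<Sum>j<N. \<bar>(A ^\<^sub>m k) $$ (i, j)\<bar> * \<bar>x j\<bar>)" by (simp add: abs_mult)
    also have "\<dots> \<le> (\<Sum>j<N. q ^ k * K * \<bar>x j\<bar>)"
      by (intro sum_mono mult_right_mono entry) auto
    finally show ?thesis using q by (simp add: sum_distrib_left mult_ac)
  qed
  have "(\<lambda>k. q ^ k) \<longlonglongrightarrow> 0" using q by (intro LIMSEQ_power_zero) simp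
  thus ?thesis by (rule tendsto_0_le) (use bound in \<open>intro always_eventually allI\<close>)
qed

lemma matvec_char_matrix:
  assumes "A \<in> carrier_mat n n" "i < n"
  shows "matvec (char_matrix A c) x i = matvec A x i - c * x i"
proof -
  have "matvec (char_matrix A c) x i = (\<Sum>j<n. A $$ (i, j) * x j - (if j = i then c * x j else 0))"
    unfolding matvec_def char_matrix_def using assms by (intro sum.cong) (auto simp: algebra_simps)
  thus ?thesis unfolding matvec_def sum_subtractf using assms by simp
qed

lemma resolvent_equation_solvable:
  assumes A: "A \<in> carrier_mat N N" and rho: "real_spectral_radius A < c"
  shows "\<exists>x. \<forall>i<N. c * x i - matvec A x i = w i"
proof -
  let ?D = "char_matrix A c"
  have D: "?D \<in> carrier_mat N N" using A by simp
  have "\<not> eigenvalue A c" using eigenvalue_abs_le_real_spectral_radius[OF A] rho by force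
  hence "det ?D \<noteq> 0" using eigenvalue_det[OF A] by simp
  then obtain B where B: "B \<in> carrier_mat N N" "?D * B = 1\<^sub>m N"
    using det_non_zero_imp_unit[OF D, of "()"] unfolding Units_def by (auto simp: ring_mat_def)
  have "c * matvec B (\<lambda>j. - w j) i - matvec A (matvec B (\<lambda>j. - w j)) i = w i" if i: "i < N" for i
  proof -
    have "matvec ?D (matvec B (\<lambda>j. - w j)) i = - w i"
      using matvec_mult[OF D B(1) i, symmetric] B(2) matvec_one[OF i] by simp
    thus ?thesis using matvec_char_matrix[OF A i] by simp
  qed
  thus ?thesis by blast
qed

text \<open>For \<open>R = A / c\<close> the solution satisfies \<open>R x = x - w / c\<close>, so the iterates \<open>R\<^sup>k x\<close>
  decrease from \<open>x - w / c\<close> towards their limit \<open>0\<close>.\<close>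

lemma nonneg_resolvent_solution:
  assumes A: "A \<in> carrier_mat N N" and nn: "nonneg_mat A" and N: "N > 0"
    and rho: "real_spectral_radius A < c" and w: "\<And>i. i < N \<Longrightarrow> w i \<ge> 0"
  shows "\<exists>x. (\<forall>i<N. c * x i - matvec A x i = w i) \<and> (\<forall>i<N. w i / c \<le> x i)"
proof -
  have c: "c > 0" using real_spectral_radius_nonneg[OF A N] rho by simp
  obtain x where x: "\<And>i. i < N \<Longrightarrow> c * x i - matvec A x i = w i"
    using resolvent_equation_solvable[OF A rho] by blast
  define R where "R = (1 / c) \<cdot>\<^sub>m A"
  have R: "R \<in> carrier_mat N N" using A by (simp add: R_def)
  have Rnn: "nonneg_mat R" using nn c A by (simp add: R_def nonneg_mat_def)
  have Rx: "matvec R x i = x i - w i / c" if "i < N" for i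
  proof -
    have "matvec R x i = (1 / c) * matvec A x i"
      unfolding R_def matvec_def using A that
      by (auto simp: sum_distrib_left mult_ac intro!: sum.cong)
    thus ?thesis using x[OF that] c by (simp add: field_simps)
  qed
  have iterate: "matvec (R ^\<^sub>m Suc k) x i \<le> x i - w i / c" if "i < N" for k i
    using that
  proof (induction k arbitrary: i)
    case 0
    show ?case using Rx[OF 0] matvec_mult[of "1\<^sub>m N" N N R N i] matvec_one R 0 by simp
  next
    case (Suc k)
    have Rk: "R ^\<^sub>m Suc k \<in> carrier_mat N N" by (rule pow_carrier_mat[OF R])
    have "matvec (R ^\<^sub>m Suc (Suc k)) x i = matvec (R ^\<^sub>m Suc k) (matvec R x) i"
      using matvec_mult[OF Rk R Suc.prems] by (simp only: pow_mat.simps(2)[of R "Suc k"])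
    also have "\<dots> = matvec (R ^\<^sub>m Suc k) (\<lambda>j. x j - w j / c) i"
      using Rx Rk by (intro matvec_cong) auto
    also have "\<dots> \<le> matvec (R ^\<^sub>m Suc k) x i"
      using nonneg_mat_power[OF R Rnn, of "Suc k"] Rk Suc.prems w c
      by (intro matvec_mono) (auto simp del: pow_mat.simps)
    finally show ?case using Suc.IH[OF Suc.prems] by linarith
  qed
  have "real_spectral_radius R \<le> (1 / c) * real_spectral_radius A"
    unfolding R_def by (rule real_spectral_radius_smult_le[OF A N]) (use c in simp)
  also have "\<dots> < 1" using rho c by (simp add: field_simps)
  finally have "w i / c \<le> x i" if "i < N" for i
    using LIMSEQ_le_const2[OF LIMSEQ_Suc[OF matvec_power_tendsto_zero[OF R N _ that]]]
      iterate[OF that] by fastforce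
  thus ?thesis using x by blast
qed

lemma subinvariant_if_spectral_radius_less:
  assumes A: "A \<in> carrier_mat N N" and nn: "nonneg_mat A" and N: "N > 0"
    and rho: "real_spectral_radius A < c"
  shows "\<exists>x. (\<forall>i<N. x i > 0) \<and> (\<forall>i<N. matvec A x i < c * x i)"
proof -
  have c: "c > 0" using real_spectral_radius_nonneg[OF A N] rho by simp
  obtain x where "\<forall>i<N. c * x i - matvec A x i = 1" "\<forall>i<N. 1 / c \<le> x i"
    using nonneg_resolvent_solution[OF A nn N rho, of "\<lambda>_. 1"] by auto
  moreover have "1 / c > 0" using c by simp
  ultimately show ?thesis by (metis less_add_one diff_eq_eq add.commute less_le_trans)
qed

section \<open>The iteration matrix of a nonnegative splitting\<close>

lemma strictly_lower_fixpoint_ge: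
  assumes L: "L \<in> carrier_mat N N" and nn: "nonneg_mat L"
    and lower: "\<And>i j. i < N \<Longrightarrow> j < N \<Longrightarrow> i \<le> j \<Longrightarrow> L $$ (i, j) = 0"
    and eq: "\<And>i. i < N \<Longrightarrow> x i - matvec L x i = v i"
    and v: "\<And>i. i < N \<Longrightarrow> v i \<ge> 0"
    and i: "i < N"
  shows "v i \<le> x i"
  using i
proof (induction i rule: less_induct)
  case (less i)
  have "0 \<le> L $$ (i, j) * x j" if j: "j < N" for j
  proof (cases "i \<le> j")
    case False
    hence "0 \<le> x j" using less.IH[of j] v[of j] j by force
    thus ?thesis using nn L less.prems j unfolding nonneg_mat_def by simp
  qed (use lower less.prems j in simp)
  hence "matvec L x i \<ge> 0" unfolding matvec_def using L by (auto intro!: sum_nonneg)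
  thus ?case using eq[OF less.prems] by simp
qed

lemma one_minus_strictly_lower_inverse:
  assumes L: "L \<in> carrier_mat N N" and nn: "nonneg_mat L"
    and lower: "\<And>i j. i < N \<Longrightarrow> j < N \<Longrightarrow> i \<le> j \<Longrightarrow> L $$ (i, j) = 0"
  obtains Q where "mat_inverse (1\<^sub>m N - L) = Some Q" "Q \<in> carrier_mat N N"
    "(1\<^sub>m N - L) * Q = 1\<^sub>m N" "nonneg_mat Q"
proof -
  let ?P = "1\<^sub>m N - L"
  have P: "?P \<in> carrier_mat N N" using minus_carrier_mat[OF L] by simp
  have "det ?P = prod_list (diag_mat ?P)"
    by (rule det_lower_triangular[OF _ P]) (use L lower in simp)
  also have "\<dots> = prod_list (map (\<lambda>i. 1) [0..<N])"
    unfolding diag_mat_def using L lower by (intro arg_cong[where f = prod_list] map_cong) auto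
  also have "\<dots> = 1" by (simp add: map_replicate_const)
  finally have "?P \<in> Units (ring_mat TYPE(real) N ())" using det_non_zero_imp_unit[OF P] by simp
  then obtain Q where Q: "mat_inverse ?P = Some Q"
    using mat_inverse(1)[OF P] by (metis option.exhaust)
  have QP: "Q \<in> carrier_mat N N" "?P * Q = 1\<^sub>m N" using mat_inverse(2)[OF P Q] by auto
  have "nonneg_mat Q" unfolding nonneg_mat_def
  proof (intro allI impI)
    fix i j assume "i < dim_row Q" "j < dim_col Q"
    hence ij: "i < N" "j < N" using QP by auto
    have "Q $$ (k, j) - matvec L (\<lambda>k. Q $$ (k, j)) k = (if k = j then 1 else 0)" if k: "k < N" for k
    proof -
      have "(?P * Q) $$ (k, j) = matvec ?P (\<lambda>k. Q $$ (k, j)) k"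
        using L QP(1) k ij by (simp add: matvec_def scalar_prod_def atLeast0LessThan)
      thus ?thesis using QP(2) matvec_one_minus[OF L k] k ij by simp
    qed
    from strictly_lower_fixpoint_ge[OF L nn lower this _ ij(1)]
    show "Q $$ (i, j) \<ge> 0" by (smt (verit))
  qed
  with Q QP show ?thesis using that by blast
qed

definition nonneg_parts :: "nat \<Rightarrow> real mat list \<Rightarrow> bool" where
  "nonneg_parts n Cs \<longleftrightarrow> (\<forall>C\<in>set Cs. C \<in> carrier_mat n n \<and> nonneg_mat C)"

lemma nonneg_parts_nth:
  "nonneg_parts n Cs \<Longrightarrow> q < length Cs \<Longrightarrow> Cs ! q \<in> carrier_mat n n \<and> nonneg_mat (Cs ! q)"
  unfolding nonneg_parts_def by simp

definition block_mat :: "nat \<Rightarrow> real mat list \<Rightarrow> (nat \<Rightarrow> nat \<Rightarrow> bool) \<Rightarrow> real mat" where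
  "block_mat n Cs P = mat (length Cs * n) (length Cs * n) (\<lambda>(k, l).
     if P (k div n) (l div n) then (Cs ! (l div n)) $$ (k mod n, l mod n) else 0)"

lemma block_L_eq_block_mat: "block_L n Cs = block_mat n Cs (\<lambda>p q. q < p)"
  unfolding block_L_def block_mat_def Let_def ..

lemma block_U_eq_block_mat: "block_U n Cs = block_mat n Cs (\<lambda>p q. p \<le> q)"
  unfolding block_U_def block_mat_def Let_def ..

lemma block_mat_carrier: "block_mat n Cs P \<in> carrier_mat (length Cs * n) (length Cs * n)"
  unfolding block_mat_def by simp

lemma nonneg_block_mat:
  assumes "n > 0" "nonneg_parts n Cs"
  shows "nonneg_mat (block_mat n Cs P)"
  unfolding nonneg_mat_def
proof (intro allI impI)
  fix k l assume "k < dim_row (block_mat n Cs P)" "l < dim_col (block_mat n Cs P)"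
  hence kl: "k < length Cs * n" "l < length Cs * n" unfolding block_mat_def by auto
  hence "Cs ! (l div n) \<in> carrier_mat n n \<and> nonneg_mat (Cs ! (l div n))"
    using assms unfolding nonneg_parts_def by (simp add: less_mult_imp_div_less)
  thus "block_mat n Cs P $$ (k, l) \<ge> 0"
    using kl assms(1) unfolding block_mat_def nonneg_mat_def by auto
qed

lemma block_L_strictly_lower:
  assumes "k \<le> l" "l < length Cs * n"
  shows "block_L n Cs $$ (k, l) = 0"
  using assms div_le_mono[OF assms(1), of n] unfolding block_L_def Let_def by auto

lemma block_index_less:
  assumes "p < d" "b < n"
  shows "p * n + b < d * (n :: nat)"
proof -
  have "p * n + b < Suc p * n" using assms by simp
  also have "\<dots> \<le> d * n" using assms by (intro mult_right_mono) auto
  finally show ?thesis .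
qed

lemma sum_lessThan_mult_blocks: "(\<Sum>k<d * n. f k) = (\<Sum>p<d. \<Sum>b<n. f (p * n + b :: nat))"
proof -
  have "(\<Sum>b<n. f (p * n + b)) = sum f {p * n..<p * n + n}" for p
    using sum.shift_bounds_nat_ivl[of f 0 "p * n" n] by (simp add: atLeast0LessThan add.commute)
  thus ?thesis by (simp add: sum.nat_group)
qed

lemma matvec_block_mat:
  assumes ok: "nonneg_parts n Cs" and p: "p < length Cs" and a: "a < n"
  shows "matvec (block_mat n Cs P) y (p * n + a) =
    (\<Sum>q<length Cs. if P p q then matvec (Cs ! q) (\<lambda>b. y (q * n + b)) a else 0)"
proof -
  let ?d = "length Cs"
  have "matvec (block_mat n Cs P) y (p * n + a) =
      (\<Sum>q<?d. \<Sum>b<n. block_mat n Cs P $$ (p * n + a, q * n + b) * y (q * n + b))"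
    unfolding matvec_def using block_mat_carrier[of n Cs P]
    by (simp add: sum_lessThan_mult_blocks)
  also have "\<dots> = (\<Sum>q<?d. if P p q then matvec (Cs ! q) (\<lambda>b. y (q * n + b)) a else 0)"
  proof (rule sum.cong[OF refl])
    fix q assume q: "q \<in> {..<?d}"
    have "Cs ! q \<in> carrier_mat n n" using ok q unfolding nonneg_parts_def by auto
    thus "(\<Sum>b<n. block_mat n Cs P $$ (p * n + a, q * n + b) * y (q * n + b)) =
        (if P p q then matvec (Cs ! q) (\<lambda>b. y (q * n + b)) a else 0)"
      using p q a block_index_less[OF p a] block_index_less[of q ?d _ n]
      unfolding block_mat_def matvec_def by (auto intro!: sum.cong)
  qed
  finally show ?thesis .
qed

lemma block_L_U_properties:
  assumes n: "n > 0" and ok: "nonneg_parts n Cs"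
  defines "N \<equiv> length Cs * n"
  shows "block_L n Cs \<in> carrier_mat N N" "block_U n Cs \<in> carrier_mat N N"
    and "nonneg_mat (block_L n Cs)" "nonneg_mat (block_U n Cs)"
    and "\<And>i j. i < N \<Longrightarrow> j < N \<Longrightarrow> i \<le> j \<Longrightarrow> block_L n Cs $$ (i, j) = 0"
proof -
  show "block_L n Cs \<in> carrier_mat N N" "block_U n Cs \<in> carrier_mat N N"
    unfolding N_def block_L_eq_block_mat block_U_eq_block_mat by (rule block_mat_carrier)+
  show "nonneg_mat (block_L n Cs)" "nonneg_mat (block_U n Cs)"
    unfolding block_L_eq_block_mat block_U_eq_block_mat by (rule nonneg_block_mat[OF n ok])+
  show "\<And>i j. i < N \<Longrightarrow> j < N \<Longrightarrow> i \<le> j \<Longrightarrow> block_L n Cs $$ (i, j) = 0"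
    using block_L_strictly_lower unfolding N_def by blast
qed

lemma iteration_matrix_factor:
  assumes n: "n > 0" and ok: "nonneg_parts n Cs"
  defines "N \<equiv> length Cs * n"
  obtains Q where "Q \<in> carrier_mat N N" "nonneg_mat Q" "(1\<^sub>m N - block_L n Cs) * Q = 1\<^sub>m N"
    "iteration_matrix n Cs = Q * block_U n Cs"
proof -
  note L = block_L_U_properties(1)[OF n ok, folded N_def]
    and Lnn = block_L_U_properties(3)[OF n ok]
    and lower = block_L_U_properties(5)[OF n ok, folded N_def]
  obtain Q where Q: "mat_inverse (1\<^sub>m N - block_L n Cs) = Some Q" "Q \<in> carrier_mat N N"
    "(1\<^sub>m N - block_L n Cs) * Q = 1\<^sub>m N" "nonneg_mat Q"
    by (rule one_minus_strictly_lower_inverse[OF L Lnn lower])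
  have "iteration_matrix n Cs = Q * block_U n Cs"
    unfolding iteration_matrix_def Let_def N_def[symmetric] using Q(1) by simp
  thus thesis by (rule that[OF Q(2) Q(4) Q(3)])
qed

lemma matvec_inverse_mult_diff:
  assumes P: "P \<in> carrier_mat N N" and Q: "Q \<in> carrier_mat N N" and U: "U \<in> carrier_mat N N"
    and PQ: "P * Q = 1\<^sub>m N" and k: "k < N"
  shows "matvec P (\<lambda>j. c * x j - matvec (Q * U) x j) k = c * matvec P x k - matvec U x k"
proof -
  have "P * (Q * U) = (P * Q) * U" by (rule assoc_mult_mat[OF P Q U, symmetric])
  also have "\<dots> = U" using PQ U by simp
  finally have "matvec P (matvec (Q * U) x) k = matvec U x k"
    using matvec_mult[OF P mult_carrier_mat[OF Q U] k] by simp
  thus ?thesis by (simp add: matvec_scale_diff)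
qed

lemma block_row_identity:
  assumes ok: "nonneg_parts n Cs" and p: "p < length Cs" and a: "a < n"
  defines "N \<equiv> length Cs * n"
  shows "c * matvec (1\<^sub>m N - block_L n Cs) y (p * n + a) - matvec (block_U n Cs) y (p * n + a) =
    c * y (p * n + a) -
      (\<Sum>q<length Cs. (if q < p then c else 1) * matvec (Cs ! q) (\<lambda>b. y (q * n + b)) a)"
proof -
  let ?Z = "\<lambda>q. matvec (Cs ! q) (\<lambda>b. y (q * n + b)) a"
  have L: "block_L n Cs \<in> carrier_mat N N"
    unfolding N_def block_L_eq_block_mat by (rule block_mat_carrier)
  have Lrow: "matvec (1\<^sub>m N - block_L n Cs) y (p * n + a) =
      y (p * n + a) - (\<Sum>q<length Cs. if q < p then ?Z q else 0)"
    using matvec_one_minus[OF L block_index_less[OF p a, folded N_def]]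
    by (simp add: block_L_eq_block_mat matvec_block_mat[OF ok p a])
  have Urow: "matvec (block_U n Cs) y (p * n + a) = (\<Sum>q<length Cs. if p \<le> q then ?Z q else 0)"
    by (simp add: block_U_eq_block_mat matvec_block_mat[OF ok p a])
  have "c * (\<Sum>q<length Cs. if q < p then ?Z q else 0) + (\<Sum>q<length Cs. if p \<le> q then ?Z q else 0)
      = (\<Sum>q<length Cs. c * (if q < p then ?Z q else 0) + (if p \<le> q then ?Z q else 0))"
    by (simp add: sum_distrib_left sum.distrib)
  also have "\<dots> = (\<Sum>q<length Cs. (if q < p then c else 1) * ?Z q)"
    by (rule sum.cong[OF refl]) simp
  finally show ?thesis unfolding Lrow Urow by (simp add: algebra_simps)
qed

text \<open>A positive block vector \<open>ys\<close> with \<open>(c L + U) ys < c ys\<close>; the \<open>q\<close>-th block of the sum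
  carries weight \<open>c\<close> exactly when it lies in the strictly lower part of row \<open>p\<close>.\<close>

definition block_subinvariant :: "nat \<Rightarrow> real \<Rightarrow> real mat list \<Rightarrow> bool" where
  "block_subinvariant n c Cs \<longleftrightarrow> (\<exists>ys. (\<forall>q<length Cs. \<forall>a<n. ys q a > 0) \<and>
     (\<forall>p<length Cs. \<forall>a<n.
        (\<Sum>q<length Cs. (if q < p then c else 1) * matvec (Cs ! q) (ys q) a) < c * ys p a))"

lemma block_subinvariant_if_iteration_less:
  assumes n: "n > 0" and ok: "nonneg_parts n Cs" and ne: "Cs \<noteq> []"
    and rho: "real_spectral_radius (iteration_matrix n Cs) < c"
  shows "block_subinvariant n c Cs"
proof -
  define N where "N = length Cs * n"
  let ?L = "block_L n Cs" and ?U = "block_U n Cs"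
  obtain Q where Q: "Q \<in> carrier_mat N N" "nonneg_mat Q" "(1\<^sub>m N - ?L) * Q = 1\<^sub>m N"
    and T: "iteration_matrix n Cs = Q * ?U"
    using iteration_matrix_factor[OF n ok] unfolding N_def by blast
  note block = block_L_U_properties[OF n ok, folded N_def]
  note L = block(1) and U = block(2) and Lnn = block(3) and Unn = block(4) and lower = block(5)
  have N: "N > 0" using n ne by (simp add: N_def)
  have P: "1\<^sub>m N - ?L \<in> carrier_mat N N" using minus_carrier_mat[OF L] by simp
  define w where "w = matvec Q (\<lambda>_. 1)"
  have Pw: "matvec (1\<^sub>m N - ?L) w k = 1" if k: "k < N" for k
    using matvec_mult[OF P Q(1) k] Q(3) matvec_one[OF k] unfolding w_def by simp
  have w: "1 \<le> w k" if k: "k < N" for k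
    using strictly_lower_fixpoint_ge[OF L Lnn lower _ _ k, of w "\<lambda>_. 1"] Pw matvec_one_minus[OF L]
    by simp
  have T': "Q * ?U \<in> carrier_mat N N" using Q(1) U by simp
  have c: "c > 0" using rho real_spectral_radius_nonneg[OF T' N] T by simp
  have wnn: "0 \<le> w k" if "k < N" for k using w[OF that] by simp
  obtain x where x: "\<forall>k<N. c * x k - matvec (Q * ?U) x k = w k"
    and xw: "\<forall>k<N. w k / c \<le> x k"
    using nonneg_resolvent_solution[where w = w,
        OF T' nonneg_mat_mult[OF Q(1) U Q(2) Unn] N rho[unfolded T] wnn]
    by blast
  have key: "c * matvec (1\<^sub>m N - ?L) x k - matvec ?U x k = 1" if k: "k < N" for k
  proof -
    have "c * matvec (1\<^sub>m N - ?L) x k - matvec ?U x k =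
        matvec (1\<^sub>m N - ?L) (\<lambda>j. c * x j - matvec (Q * ?U) x j) k"
      by (rule matvec_inverse_mult_diff[OF P Q(1) U Q(3) k, symmetric])
    also have "\<dots> = matvec (1\<^sub>m N - ?L) w k" using x P by (intro matvec_cong) auto
    finally show ?thesis using Pw[OF k] by simp
  qed
  show ?thesis unfolding block_subinvariant_def
  proof (intro exI[of _ "\<lambda>q b. x (q * n + b)"] conjI allI impI)
    fix q a assume "q < length Cs" "a < n"
    hence "q * n + a < N" unfolding N_def by (rule block_index_less)
    moreover have "w (q * n + a) / c > 0" using w[OF calculation] c by simp
    ultimately show "x (q * n + a) > 0" using xw by (meson less_le_trans)
  next
    fix p a assume p: "p < length Cs" and a: "a < n"
    from key[OF block_index_less[OF p a, folded N_def]] block_row_identity[OF ok p a, of c x]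
    show "(\<Sum>q<length Cs. (if q < p then c else 1) * matvec (Cs ! q) (\<lambda>b. x (q * n + b)) a)
        < c * x (p * n + a)" unfolding N_def by linarith
  qed
qed

lemma iteration_less_if_block_subinvariant:
  assumes n: "n > 0" and ok: "nonneg_parts n Cs" and ne: "Cs \<noteq> []"
    and sub: "block_subinvariant n c Cs"
  shows "real_spectral_radius (iteration_matrix n Cs) < c"
proof -
  define N where "N = length Cs * n"
  let ?L = "block_L n Cs" and ?U = "block_U n Cs"
  obtain Q where Q: "Q \<in> carrier_mat N N" "nonneg_mat Q" "(1\<^sub>m N - ?L) * Q = 1\<^sub>m N"
    and T: "iteration_matrix n Cs = Q * ?U"
    using iteration_matrix_factor[OF n ok] unfolding N_def by blast
  note block = block_L_U_properties[OF n ok, folded N_def]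
  note L = block(1) and U = block(2) and Lnn = block(3) and Unn = block(4) and lower = block(5)
  have P: "1\<^sub>m N - ?L \<in> carrier_mat N N" using minus_carrier_mat[OF L] by simp
  obtain ys where pos: "\<forall>q<length Cs. \<forall>a<n. ys q a > 0"
    and ineq: "\<forall>p<length Cs. \<forall>a<n.
      (\<Sum>q<length Cs. (if q < p then c else 1) * matvec (Cs ! q) (ys q) a) < c * ys p a"
    using sub unfolding block_subinvariant_def by blast
  define y where "y k = ys (k div n) (k mod n)" for k
  have split: "k div n < length Cs" "k mod n < n" "k = k div n * n + k mod n" if "k < N" for k
    using that n unfolding N_def by (auto simp: less_mult_imp_div_less)
  have v: "c * matvec (1\<^sub>m N - ?L) y k - matvec ?U y k > 0" if k: "k < N" for k
  proof -
    have "matvec (Cs ! q) (\<lambda>b. y (q * n + b)) a = matvec (Cs ! q) (ys q) a"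
      if q: "q < length Cs" for q a
    proof -
      have "dim_col (Cs ! q) = n" using nonneg_parts_nth[OF ok q] by auto
      thus ?thesis using n unfolding y_def by (intro matvec_cong) simp
    qed
    hence "(\<Sum>q<length Cs. (if q < k div n then c else 1) *
          matvec (Cs ! q) (\<lambda>b. y (q * n + b)) (k mod n)) =
        (\<Sum>q<length Cs. (if q < k div n then c else 1) * matvec (Cs ! q) (ys q) (k mod n))"
      by (intro sum.cong) auto
    also have "\<dots> < c * y k" using ineq split(1,2)[OF k] unfolding y_def by blast
    finally show ?thesis
      using block_row_identity[OF ok split(1,2)[OF k], of c y, unfolded div_mult_mod_eq]
      unfolding N_def by linarith
  qed
  define z where "z k = c * y k - matvec (Q * ?U) y k" for k
  have "z k - matvec ?L z k = c * matvec (1\<^sub>m N - ?L) y k - matvec ?U y k" if k: "k < N" for k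
    using matvec_inverse_mult_diff[OF P Q(1) U Q(3) k, of c y] matvec_one_minus[OF L k, of z]
    unfolding z_def by simp
  hence z: "c * matvec (1\<^sub>m N - ?L) y k - matvec ?U y k \<le> z k" if "k < N" for k
    using strictly_lower_fixpoint_ge[where x = z
        and v = "\<lambda>k. c * matvec (1\<^sub>m N - ?L) y k - matvec ?U y k", OF L Lnn lower _ _ that] v
    by (simp add: less_imp_le)
  show ?thesis unfolding T
  proof (rule spectral_radius_less_if_subinvariant)
    show "Q * ?U \<in> carrier_mat N N" "nonneg_mat (Q * ?U)" "N > 0"
      using Q U Unn nonneg_mat_mult n ne by (auto simp: N_def)
    fix k assume k: "k < N"
    show "y k > 0" using pos split[OF k] unfolding y_def by blast
    show "matvec (Q * ?U) y k < c * y k" using z[OF k] v[OF k] unfolding z_def by linarith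
  qed
qed

lemma iteration_spectral_radius_less_iff:
  assumes "n > 0" "nonneg_parts n Cs" "Cs \<noteq> []"
  shows "real_spectral_radius (iteration_matrix n Cs) < c \<longleftrightarrow> block_subinvariant n c Cs"
  using block_subinvariant_if_iteration_less iteration_less_if_block_subinvariant assms by blast

section \<open>Cyclic shifts\<close>

lemma cyc_shift_eq_rotate: "cyc_shift xs = rotate (length xs - 1) xs"
proof (cases xs rule: rev_cases)
  case (snoc ys y)
  thus ?thesis unfolding cyc_shift_def using rotate_append[of ys "[y]"] by simp
qed (simp add: cyc_shift_def)

lemma cyc_shift_pow_eq_rotate: "(cyc_shift ^^ k) xs = rotate (k * (length xs - 1)) xs"
  by (induction k) (simp_all add: cyc_shift_eq_rotate rotate_rotate)

lemma length_cyc_shift [simp]: "length (cyc_shift xs) = length xs"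
  by (simp add: cyc_shift_eq_rotate)

lemma length_cyc_shift_pow [simp]: "length ((cyc_shift ^^ k) xs) = length xs"
  by (simp add: cyc_shift_pow_eq_rotate)

lemma nonneg_parts_cyc_shift_pow [simp]: "nonneg_parts n ((cyc_shift ^^ k) Cs) = nonneg_parts n Cs"
  by (simp add: nonneg_parts_def cyc_shift_pow_eq_rotate)

lemma cyc_shift_pow_complement:
  assumes "r \<le> length xs"
  shows "(cyc_shift ^^ (length xs - r)) ((cyc_shift ^^ r) xs) = xs"
proof -
  have "(length xs - r) * (length xs - 1) + r * (length xs - 1) = length xs * (length xs - 1)"
    using assms by (simp add: add_mult_distrib[symmetric])
  thus ?thesis by (simp add: cyc_shift_pow_eq_rotate rotate_rotate rotate_id)
qed

lemma cyc_shift_nth_0: "xs \<noteq> [] \<Longrightarrow> cyc_shift xs ! 0 = xs ! (length xs - 1)"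
  unfolding cyc_shift_def by (simp add: last_conv_nth)

lemma cyc_shift_nth_Suc: "Suc k < length xs \<Longrightarrow> cyc_shift xs ! Suc k = xs ! k"
  unfolding cyc_shift_def by (auto simp: nth_butlast)

text \<open>The block that moves to the front is divided by \<open>c\<close>, compensating for the weight \<open>c\<close>
  that its part now carries in every later row.\<close>

lemma block_subinvariant_cyc_shift:
  assumes c: "c > 0" and sub: "block_subinvariant n c Cs"
  shows "block_subinvariant n c (cyc_shift Cs)"
proof (cases "Cs = []")
  case False
  then obtain d0 where d: "length Cs = Suc d0" by (cases Cs) auto
  from sub obtain ys where pos: "\<forall>q<Suc d0. \<forall>a<n. ys q a > 0"
    and ineq: "\<forall>p<Suc d0. \<forall>a<n.
      (\<Sum>q<Suc d0. (if q < p then c else 1) * matvec (Cs ! q) (ys q) a) < c * ys p a"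
    unfolding block_subinvariant_def d by auto
  define ys' where "ys' q = (if q = 0 then (\<lambda>a. (1 / c) * ys d0 a) else ys (q - 1))" for q
  show ?thesis unfolding block_subinvariant_def length_cyc_shift d
  proof (intro exI[of _ ys'] conjI allI impI)
    fix q a assume "q < Suc d0" "a < n"
    thus "ys' q a > 0" using pos c unfolding ys'_def by auto
  next
    fix p a assume p: "p < Suc d0" and a: "a < n"
    define Z where "Z q = matvec (Cs ! q) (ys q) a" for q
    have Z0: "matvec (cyc_shift Cs ! 0) (ys' 0) a = (1 / c) * Z d0"
      unfolding cyc_shift_nth_0[OF False] d ys'_def Z_def using matvec_scale[of "Cs ! d0" "1 / c"]
      by simp
    have ZSuc: "matvec (cyc_shift Cs ! Suc q) (ys' (Suc q)) a = Z q" if "q < d0" for q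
      using cyc_shift_nth_Suc[of q Cs] that d unfolding ys'_def Z_def by simp
    have shifted: "(\<Sum>q<Suc d0. (if q < p then c else 1) * matvec (cyc_shift Cs ! q) (ys' q) a) =
        (if 0 < p then c else 1) * ((1 / c) * Z d0) + (\<Sum>q<d0. (if Suc q < p then c else 1) * Z q)"
      unfolding sum.lessThan_Suc_shift Z0 using ZSuc by simp
    show "(\<Sum>q<Suc d0. (if q < p then c else 1) * matvec (cyc_shift Cs ! q) (ys' q) a) < c * ys' p a"
    proof (cases p)
      case 0
      have "(\<Sum>q<Suc d0. (if q < d0 then c else 1) * Z q) < c * ys d0 a"
        using ineq a unfolding Z_def by blast
      hence "c * ((1 / c) * Z d0 + (\<Sum>q<d0. Z q)) < c * ys d0 a"
        using c by (simp add: sum_distrib_left algebra_simps)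
      hence "(1 / c) * Z d0 + (\<Sum>q<d0. Z q) < ys d0 a" using c by simp
      thus ?thesis unfolding shifted using 0 c unfolding ys'_def by simp
    next
      case (Suc p0)
      have "(\<Sum>q<Suc d0. (if q < p0 then c else 1) * Z q) < c * ys p0 a"
        using ineq a p Suc unfolding Z_def by simp
      thus ?thesis unfolding shifted using Suc p c unfolding ys'_def by simp
    qed
  qed
qed (use sub in \<open>simp add: cyc_shift_def\<close>)

lemma block_subinvariant_cyc_shift_pow:
  "c > 0 \<Longrightarrow> block_subinvariant n c Cs \<Longrightarrow> block_subinvariant n c ((cyc_shift ^^ k) Cs)"
  by (induction k) (simp_all add: block_subinvariant_cyc_shift)

lemma real_eq_if_same_strict_upper_bounds:
  fixes a b :: real
  assumes "0 \<le> a" "0 \<le> b" and bounds: "\<And>c. c > 0 \<Longrightarrow> a < c \<longleftrightarrow> b < c"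
  shows "a = b"
proof (rule ccontr)
  assume "a \<noteq> b"
  hence "(a + b) / 2 > 0" using assms(1,2) by simp
  from bounds[OF this] \<open>a \<noteq> b\<close> show False by (cases "a < b") (auto simp: field_simps)
qed

lemma iteration_spectral_radius_nonneg:
  assumes n: "n > 0" and ok: "nonneg_parts n Cs" and ne: "Cs \<noteq> []"
  shows "real_spectral_radius (iteration_matrix n Cs) \<ge> 0"
proof -
  obtain Q where "Q \<in> carrier_mat (length Cs * n) (length Cs * n)"
    and "iteration_matrix n Cs = Q * block_U n Cs"
    using iteration_matrix_factor[OF n ok] by blast
  moreover have "block_U n Cs \<in> carrier_mat (length Cs * n) (length Cs * n)"
    unfolding block_U_eq_block_mat by (rule block_mat_carrier)
  ultimately show ?thesis
    using n ne by (intro real_spectral_radius_nonneg[of _ "length Cs * n"]) auto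
qed

lemma iteration_spectral_radius_cyc_shift_pow:
  assumes n: "n > 0" and ok: "nonneg_parts n Cs" and ne: "Cs \<noteq> []" and r: "r \<le> length Cs"
  shows "real_spectral_radius (iteration_matrix n ((cyc_shift ^^ r) Cs)) =
    real_spectral_radius (iteration_matrix n Cs)"
proof (rule real_eq_if_same_strict_upper_bounds)
  have ok': "nonneg_parts n ((cyc_shift ^^ r) Cs)" using ok by simp
  have ne': "(cyc_shift ^^ r) Cs \<noteq> []" using ne by (simp flip: length_greater_0_conv)
  show "real_spectral_radius (iteration_matrix n ((cyc_shift ^^ r) Cs)) \<ge> 0"
    by (rule iteration_spectral_radius_nonneg[OF n ok' ne'])
  show "real_spectral_radius (iteration_matrix n Cs) \<ge> 0"
    by (rule iteration_spectral_radius_nonneg[OF n ok ne])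
  fix c :: real assume c: "c > 0"
  have "block_subinvariant n c ((cyc_shift ^^ r) Cs) \<longleftrightarrow> block_subinvariant n c Cs"
    using block_subinvariant_cyc_shift_pow[OF c, of n "(cyc_shift ^^ r) Cs" "length Cs - r"]
      block_subinvariant_cyc_shift_pow[OF c, of n Cs r]
    unfolding cyc_shift_pow_complement[OF r] by blast
  thus "real_spectral_radius (iteration_matrix n ((cyc_shift ^^ r) Cs)) < c \<longleftrightarrow>
      real_spectral_radius (iteration_matrix n Cs) < c"
    by (simp add: iteration_spectral_radius_less_iff[OF n ok ne]
        iteration_spectral_radius_less_iff[OF n ok' ne'])
qed

section \<open>Comparison with the Jacobi matrix and refinement\<close>

lemma mat_sum_list_Cons: "mat_sum_list n (C # Cs) = C + mat_sum_list n Cs"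
  unfolding mat_sum_list_def by simp

lemma mat_sum_list_carrier: "\<forall>C\<in>set Cs. C \<in> carrier_mat n n \<Longrightarrow> mat_sum_list n Cs \<in> carrier_mat n n"
  by (induction Cs) (auto simp: mat_sum_list_def)

lemma index_mat_sum_list:
  "\<forall>C\<in>set Cs. C \<in> carrier_mat n n \<Longrightarrow> a < n \<Longrightarrow> b < n \<Longrightarrow>
    mat_sum_list n Cs $$ (a, b) = (\<Sum>q<length Cs. (Cs ! q) $$ (a, b))"
proof (induction Cs)
  case (Cons C Cs)
  hence "mat_sum_list n Cs \<in> carrier_mat n n" by (simp add: mat_sum_list_carrier)
  with Cons show ?case by (simp add: mat_sum_list_Cons sum.lessThan_Suc_shift del: sum.lessThan_Suc)
qed (simp add: mat_sum_list_def)

lemma matvec_mat_sum_list: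
  assumes Cs: "\<forall>C\<in>set Cs. C \<in> carrier_mat n n" and a: "a < n"
  shows "matvec (mat_sum_list n Cs) y a = (\<Sum>q<length Cs. matvec (Cs ! q) y a)"
proof -
  have "matvec (mat_sum_list n Cs) y a = (\<Sum>b<n. (\<Sum>q<length Cs. (Cs ! q) $$ (a, b)) * y b)"
    unfolding matvec_def using mat_sum_list_carrier[OF Cs] index_mat_sum_list[OF Cs a] by simp
  also have "\<dots> = (\<Sum>q<length Cs. \<Sum>b<n. (Cs ! q) $$ (a, b) * y b)"
    by (simp add: sum_distrib_right sum.swap[of _ "{..<n}"])
  also have "\<dots> = (\<Sum>q<length Cs. matvec (Cs ! q) y a)"
    unfolding matvec_def using Cs by (intro sum.cong) auto
  finally show ?thesis .
qed

lemma splitting_parts_carrier: "is_splitting n d B Bs \<Longrightarrow> \<forall>C\<in>set Bs. C \<in> carrier_mat n n"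
  unfolding is_splitting_def by (auto simp: in_set_conv_nth)

lemma matvec_splitting:
  assumes "is_splitting n d B Bs" "a < n"
  shows "matvec B x a = (\<Sum>q<length Bs. matvec (Bs ! q) x a)"
  using matvec_mat_sum_list[OF splitting_parts_carrier[OF assms(1)] assms(2)] assms(1)
  unfolding is_splitting_def by simp

text \<open>Since the parts have disjoint supports, each entry of a part is either zero or the
  corresponding entry of the split matrix.\<close>

lemma splitting_nonneg_parts:
  assumes split: "is_splitting n d B Bs" and nn: "nonneg_mat B"
  shows "nonneg_parts n Bs"
proof -
  have car: "\<forall>C\<in>set Bs. C \<in> carrier_mat n n" by (rule splitting_parts_carrier[OF split])
  have len: "length Bs = d" and sum: "mat_sum_list n Bs = B"
    and disj: "\<And>p q a b. p < d \<Longrightarrow> q < d \<Longrightarrow> p \<noteq> q \<Longrightarrow> a < n \<Longrightarrow> b < n \<Longrightarrow>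
      (Bs ! p) $$ (a, b) * (Bs ! q) $$ (a, b) = 0"
    using split unfolding is_splitting_def by auto
  have entry: "(Bs ! p) $$ (a, b) \<ge> 0" if p: "p < d" and ab: "a < n" "b < n" for p a b
  proof (rule ccontr)
    assume neg: "\<not> ?thesis"
    hence "(Bs ! q) $$ (a, b) = 0" if "q \<in> {..<d} - {p}" for q
      using disj[of p q a b] p ab that by auto
    hence "B $$ (a, b) = (Bs ! p) $$ (a, b)"
      using index_mat_sum_list[OF car ab] sum len p by (simp add: sum.remove[of _ p])
    moreover have "B $$ (a, b) \<ge> 0"
      using nn mat_sum_list_carrier[OF car] ab unfolding sum nonneg_mat_def by auto
    ultimately show False using neg by simp
  qed
  show ?thesis unfolding nonneg_parts_def
  proof
    fix C assume C: "C \<in> set Bs"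
    then obtain p where p: "p < d" "Bs ! p = C" using len by (auto simp: in_set_conv_nth)
    have "C \<in> carrier_mat n n" using car C by blast
    thus "C \<in> carrier_mat n n \<and> nonneg_mat C"
      using entry[OF p(1)] unfolding p(2) nonneg_mat_def by auto
  qed
qed

lemma block_subinvariant_if_subinvariant:
  assumes ok: "nonneg_parts n Cs"
    and parts_sum: "\<And>x a. a < n \<Longrightarrow> matvec A x a = (\<Sum>q<length Cs. matvec (Cs ! q) x a)"
    and c: "c \<le> 1" and pos: "\<forall>a<n. x a > 0" and sub: "\<forall>a<n. matvec A x a < c * x a"
  shows "block_subinvariant n c Cs"
  unfolding block_subinvariant_def
proof (intro exI[of _ "\<lambda>_. x"] conjI allI impI)
  fix p a assume p: "p < length Cs" and a: "a < n"
  have "(\<Sum>q<length Cs. (if q < p then c else 1) * matvec (Cs ! q) x a) \<le>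
      (\<Sum>q<length Cs. matvec (Cs ! q) x a)"
  proof (rule sum_mono)
    fix q assume "q \<in> {..<length Cs}"
    hence "matvec (Cs ! q) x a \<ge> 0"
      using nonneg_parts_nth[OF ok, of q] a pos by (intro matvec_nonneg) (auto simp: less_imp_le)
    hence "(if q < p then c else 1) * matvec (Cs ! q) x a \<le> 1 * matvec (Cs ! q) x a"
      using c by (intro mult_right_mono) auto
    thus "(if q < p then c else 1) * matvec (Cs ! q) x a \<le> matvec (Cs ! q) x a" by simp
  qed
  also have "\<dots> < c * x a" using sub[rule_format, OF a] parts_sum[OF a, of x] by simp
  finally show "(\<Sum>q<length Cs. (if q < p then c else 1) * matvec (Cs ! q) x a) < c * x a" .
qed (use pos in simp)

text \<open>For \<open>c \<ge> 1\<close> the weights are at least \<open>1\<close>, so the entrywise minimum of the blocks is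
  subinvariant for the sum of the parts.\<close>

lemma subinvariant_if_block_subinvariant:
  assumes ok: "nonneg_parts n Cs" and ne: "Cs \<noteq> []"
    and parts_sum: "\<And>x a. a < n \<Longrightarrow> matvec A x a = (\<Sum>q<length Cs. matvec (Cs ! q) x a)"
    and c: "c \<ge> 1" and sub: "block_subinvariant n c Cs"
  shows "\<exists>x. (\<forall>a<n. x a > 0) \<and> (\<forall>a<n. matvec A x a < c * x a)"
proof -
  obtain ys where pos: "\<forall>q<length Cs. \<forall>a<n. ys q a > 0"
    and ineq: "\<forall>p<length Cs. \<forall>a<n.
      (\<Sum>q<length Cs. (if q < p then c else 1) * matvec (Cs ! q) (ys q) a) < c * ys p a"
    using sub unfolding block_subinvariant_def by blast
  define x where "x a = Min ((\<lambda>q. ys q a) ` {..<length Cs})" for a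
  have x_le: "x a \<le> ys q a" if "q < length Cs" for q a unfolding x_def using that by simp
  have x_eq: "\<exists>p<length Cs. x a = ys p a" for a
  proof -
    have "x a \<in> (\<lambda>q. ys q a) ` {..<length Cs}" unfolding x_def using ne by (intro Min_in) auto
    thus ?thesis by auto
  qed
  show ?thesis
  proof (intro exI[of _ x] conjI allI impI)
    fix a assume a: "a < n"
    obtain p where p: "p < length Cs" "x a = ys p a" using x_eq by blast
    thus "x a > 0" using pos a by simp
    have "matvec A x a \<le> (\<Sum>q<length Cs. matvec (Cs ! q) (ys q) a)"
      unfolding parts_sum[OF a] using nonneg_parts_nth[OF ok] a x_le
      by (intro sum_mono matvec_mono) auto
    also have "\<dots> \<le> (\<Sum>q<length Cs. (if q < p then c else 1) * matvec (Cs ! q) (ys q) a)"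
    proof (rule sum_mono)
      fix q assume "q \<in> {..<length Cs}"
      hence "matvec (Cs ! q) (ys q) a \<ge> 0"
        using nonneg_parts_nth[OF ok, of q] a pos by (intro matvec_nonneg) (auto simp: less_imp_le)
      hence "1 * matvec (Cs ! q) (ys q) a \<le> (if q < p then c else 1) * matvec (Cs ! q) (ys q) a"
        using c by (intro mult_right_mono) auto
      thus "matvec (Cs ! q) (ys q) a \<le> (if q < p then c else 1) * matvec (Cs ! q) (ys q) a"
        by simp
    qed
    also have "\<dots> < c * ys p a" using ineq p a by blast
    finally show "matvec A x a < c * x a" using p by simp
  qed
qed

text \<open>With \<open>\<beta> = c\<^bsup>1/d\<^esup>\<close>, the geometric blocks \<open>\<beta>\<^sup>q x\<close> turn every weight
  \<open>c \<beta>\<^sup>q\<close> or \<open>\<beta>\<^sup>q\<close> in row \<open>p\<close> into at most \<open>\<beta>\<^bsup>p + d - 1\<^esup>\<close>.\<close>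

lemma block_subinvariant_if_subinvariant_root:
  assumes ok: "nonneg_parts n Cs" and ne: "Cs \<noteq> []"
    and parts_sum: "\<And>x a. a < n \<Longrightarrow> matvec A x a = (\<Sum>q<length Cs. matvec (Cs ! q) x a)"
    and c: "c \<ge> 1" and pos: "\<forall>a<n. x a > 0"
    and sub: "\<forall>a<n. matvec A x a < root (length Cs) c * x a"
  shows "block_subinvariant n c Cs"
proof -
  define d where "d = length Cs"
  define \<beta> where "\<beta> = root d c"
  have d: "d > 0" using ne by (simp add: d_def)
  have \<beta>: "\<beta> \<ge> 1" "\<beta> ^ d = c" unfolding \<beta>_def using c d by (simp_all add: real_root_pow_pos2)
  show ?thesis unfolding block_subinvariant_def d_def[symmetric]
  proof (intro exI[of _ "\<lambda>q a. \<beta> ^ q * x a"] conjI allI impI)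
    fix q a assume "q < d" "a < n" thus "\<beta> ^ q * x a > 0" using pos \<beta> by simp
  next
    fix p a assume p: "p < d" and a: "a < n"
    define Z where "Z q = matvec (Cs ! q) x a" for q
    have Z: "Z q \<ge> 0" if "q < d" for q
      unfolding Z_def using nonneg_parts_nth[OF ok, of q] that a pos d_def
      by (intro matvec_nonneg) (auto simp: less_imp_le)
    have weight: "(if q < p then c else 1) * \<beta> ^ q \<le> \<beta> ^ (p + d - 1)" if "q < d" for q
    proof (cases "q < p")
      case True
      have "c * \<beta> ^ q = \<beta> ^ (d + q)" using \<beta> by (simp add: power_add)
      also have "\<dots> \<le> \<beta> ^ (p + d - 1)" using True \<beta> by (intro power_increasing) auto
      finally show ?thesis using True by simp
    qed (use that \<beta> in \<open>simp add: power_increasing\<close>)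
    have "(\<Sum>q<d. (if q < p then c else 1) * matvec (Cs ! q) (\<lambda>b. \<beta> ^ q * x b) a)
        = (\<Sum>q<d. ((if q < p then c else 1) * \<beta> ^ q) * Z q)"
      unfolding Z_def matvec_scale by (simp add: mult_ac)
    also have "\<dots> \<le> (\<Sum>q<d. \<beta> ^ (p + d - 1) * Z q)"
      using weight Z by (intro sum_mono mult_right_mono) auto
    also have "\<dots> = \<beta> ^ (p + d - 1) * matvec A x a"
      unfolding Z_def parts_sum[OF a] d_def by (simp add: sum_distrib_left)
    also have "\<dots> < \<beta> ^ (p + d - 1) * (\<beta> * x a)"
      using sub a \<beta> unfolding \<beta>_def d_def by simp
    also have "\<dots> = c * (\<beta> ^ p * x a)"
    proof -
      have "\<beta> ^ (p + d - 1) * \<beta> = \<beta> ^ (p + d)"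
        using d by (metis Suc_diff_1 add_gr_0 power_Suc2)
      thus ?thesis using \<beta>(2) by (simp add: power_add mult_ac)
    qed
    finally show "(\<Sum>q<d. (if q < p then c else 1) * matvec (Cs ! q) (\<lambda>b. \<beta> ^ q * x b) a)
        < c * (\<beta> ^ p * x a)" .
  qed
qed

lemma le_if_thresholds_below_one:
  fixes a b :: real
  assumes "0 \<le> a" "a < 1" and thr: "\<And>c. 0 < c \<Longrightarrow> c \<le> 1 \<Longrightarrow> a < c \<Longrightarrow> b < c"
  shows "b \<le> a"
proof (rule ccontr)
  assume "\<not> b \<le> a"
  define c where "c = min ((a + b) / 2) 1"
  have "0 < c" "c \<le> 1" "a < c" "c < b" using assms(1,2) \<open>\<not> b \<le> a\<close> by (auto simp: c_def min_def)
  with thr show False by fastforce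
qed

lemma le_if_thresholds_from_one:
  fixes a b :: real
  assumes "1 \<le> b" and thr: "\<And>c. 1 \<le> c \<Longrightarrow> a < c \<Longrightarrow> b < c"
  shows "b \<le> a"
proof (rule ccontr)
  assume "\<not> b \<le> a"
  define c where "c = max ((a + b) / 2) 1"
  have "1 \<le> c" "a < c" "c \<le> b" using assms(1) \<open>\<not> b \<le> a\<close> by (auto simp: c_def max_def)
  with thr show False by fastforce
qed

lemma splitting_iteration_spectral_radius:
  assumes n: "n > 0" and A: "A \<in> carrier_mat n n" and nn: "nonneg_mat A"
    and split: "is_splitting n d A Cs"
  defines "\<rho> \<equiv> real_spectral_radius A" and "\<tau> \<equiv> real_spectral_radius (iteration_matrix n Cs)"
  shows "\<rho> < 1 \<Longrightarrow> \<tau> \<le> \<rho>" and "1 \<le> \<rho> \<Longrightarrow> \<rho> \<le> \<tau>" and "\<rho> = 1 \<Longrightarrow> \<tau> \<le> 1"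
proof -
  have ok: "nonneg_parts n Cs" by (rule splitting_nonneg_parts[OF split nn])
  have ne: "Cs \<noteq> []" using split unfolding is_splitting_def by auto
  note parts_sum = matvec_splitting[OF split]
  note iff = iteration_spectral_radius_less_iff[OF n ok ne]
  have "\<tau> < c" if "c \<le> 1" "\<rho> < c" for c
    using subinvariant_if_spectral_radius_less[OF A nn n that(2)[unfolded \<rho>_def]]
      block_subinvariant_if_subinvariant[OF ok parts_sum that(1)] iff unfolding \<tau>_def by blast
  thus "\<tau> \<le> \<rho>" if "\<rho> < 1"
    using le_if_thresholds_below_one[OF _ that] real_spectral_radius_nonneg[OF A n]
    unfolding \<rho>_def by blast
  have "\<rho> < c" if "1 \<le> c" "\<tau> < c" for c
    using subinvariant_if_block_subinvariant[OF ok ne parts_sum that(1)] that(2) iff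
      spectral_radius_less_if_subinvariant[OF A nn n] unfolding \<rho>_def \<tau>_def by blast
  thus "\<rho> \<le> \<tau>" if "1 \<le> \<rho>" using le_if_thresholds_from_one[OF that] by blast
  show "\<tau> \<le> 1" if "\<rho> = 1"
  proof (rule ccontr)
    assume "\<not> \<tau> \<le> 1"
    define c where "c = (1 + \<tau>) / 2"
    have c: "1 \<le> c" "c < \<tau>" "\<rho> < root (length Cs) c"
      using \<open>\<not> \<tau> \<le> 1\<close> \<open>\<rho> = 1\<close> ne by (auto simp: c_def real_root_gt_1_iff)
    from subinvariant_if_spectral_radius_less[OF A nn n c(3)[unfolded \<rho>_def]]
    have "block_subinvariant n c Cs"
      using block_subinvariant_if_subinvariant_root[OF ok ne parts_sum c(1)] by blast
    with iff[of c] c(2) show False unfolding \<tau>_def by simp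
  qed
qed

text \<open>Refining the last part: for \<open>c \<le> 1\<close> the last block is duplicated, and the new last part
  only loses weight; for \<open>c \<ge> 1\<close> the two last blocks are merged by their entrywise minimum.\<close>

lemma block_subinvariant_refine:
  assumes ok': "nonneg_parts n C'"
    and len: "length C = Suc d0" and len': "length C' = Suc (Suc d0)"
    and same: "\<forall>p<d0. C' ! p = C ! p"
    and last: "\<And>y a. a < n \<Longrightarrow> matvec (C ! d0) y a = matvec (C' ! d0) y a + matvec (C' ! Suc d0) y a"
    and c: "c \<le> 1" and sub: "block_subinvariant n c C"
  shows "block_subinvariant n c C'"
proof -
  obtain ys where pos: "\<forall>q<Suc d0. \<forall>a<n. ys q a > 0"
    and ineq: "\<forall>p<Suc d0. \<forall>a<n.
      (\<Sum>q<Suc d0. (if q < p then c else 1) * matvec (C ! q) (ys q) a) < c * ys p a"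
    using sub unfolding block_subinvariant_def len by blast
  define ys' where "ys' q = ys (min q d0)" for q
  show ?thesis unfolding block_subinvariant_def len'
  proof (intro exI[of _ ys'] conjI allI impI)
    fix q a assume "q < Suc (Suc d0)" "a < n" thus "ys' q a > 0" using pos unfolding ys'_def by simp
  next
    fix p a assume p: "p < Suc (Suc d0)" and a: "a < n"
    define Z where "Z q = matvec (C ! q) (ys q) a" for q
    define Z' where "Z' q = matvec (C' ! q) (ys' q) a" for q
    have same_Z: "Z' q = Z q" if "q < d0" for q
      using same that unfolding Z_def Z'_def ys'_def by simp
    have last_Z: "Z' d0 + Z' (Suc d0) = Z d0"
      using last[OF a] unfolding Z_def Z'_def ys'_def by simp
    have Z'_nonneg: "Z' d0 \<ge> 0"
      unfolding Z'_def using nonneg_parts_nth[OF ok', of d0] len' a pos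
      by (intro matvec_nonneg) (auto simp: ys'_def less_imp_le)
    have split: "(\<Sum>q<Suc (Suc d0). (if q < p then c else 1) * Z' q) =
        (\<Sum>q<d0. (if q < p then c else 1) * Z q) + (if d0 < p then c else 1) * Z' d0
          + (if Suc d0 < p then c else 1) * Z' (Suc d0)"
      using same_Z by simp
    have "(\<Sum>q<Suc (Suc d0). (if q < p then c else 1) * Z' q) < c * ys' p a"
    proof (cases "p \<le> d0")
      case True
      have "(\<Sum>q<Suc d0. (if q < p then c else 1) * Z q) < c * ys p a"
        using ineq True a unfolding Z_def by simp
      thus ?thesis unfolding split using True last_Z unfolding ys'_def by simp
    next
      case False
      hence p: "p = Suc d0" using p by simp
      have "c * Z' d0 \<le> 1 * Z' d0" by (rule mult_right_mono[OF c Z'_nonneg])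
      moreover have "(\<Sum>q<Suc d0. (if q < d0 then c else 1) * Z q) < c * ys d0 a"
        using ineq a unfolding Z_def by blast
      ultimately show ?thesis unfolding split using p last_Z unfolding ys'_def by simp
    qed
    thus "(\<Sum>q<Suc (Suc d0). (if q < p then c else 1) * matvec (C' ! q) (ys' q) a) < c * ys' p a"
      unfolding Z'_def .
  qed
qed

lemma block_subinvariant_coarsen:
  assumes ok': "nonneg_parts n C'"
    and len: "length C = Suc d0" and len': "length C' = Suc (Suc d0)"
    and same: "\<forall>p<d0. C' ! p = C ! p"
    and last: "\<And>y a. a < n \<Longrightarrow> matvec (C ! d0) y a = matvec (C' ! d0) y a + matvec (C' ! Suc d0) y a"
    and c: "c \<ge> 1" and sub: "block_subinvariant n c C'"
  shows "block_subinvariant n c C"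
proof -
  obtain ys' where pos: "\<forall>q<Suc (Suc d0). \<forall>a<n. ys' q a > 0"
    and ineq: "\<forall>p<Suc (Suc d0). \<forall>a<n.
      (\<Sum>q<Suc (Suc d0). (if q < p then c else 1) * matvec (C' ! q) (ys' q) a) < c * ys' p a"
    using sub unfolding block_subinvariant_def len' by blast
  define ys where "ys q = (if q < d0 then ys' q else (\<lambda>a. min (ys' d0 a) (ys' (Suc d0) a)))" for q
  show ?thesis unfolding block_subinvariant_def len
  proof (intro exI[of _ ys] conjI allI impI)
    fix q a assume "q < Suc d0" "a < n" thus "ys q a > 0" using pos unfolding ys_def by simp
  next
    fix p a assume p: "p < Suc d0" and a: "a < n"
    define Z where "Z q = matvec (C ! q) (ys q) a" for q
    define Z' where "Z' q = matvec (C' ! q) (ys' q) a" for q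
    have same_Z: "Z q = Z' q" if "q < d0" for q
      using same that unfolding Z_def Z'_def ys_def by simp
    have "Z d0 = matvec (C' ! d0) (ys d0) a + matvec (C' ! Suc d0) (ys d0) a"
      unfolding Z_def by (rule last[OF a])
    also have "\<dots> \<le> Z' d0 + Z' (Suc d0)"
      unfolding Z'_def ys_def
      using nonneg_parts_nth[OF ok', of d0] nonneg_parts_nth[OF ok', of "Suc d0"] len' a
      by (intro add_mono matvec_mono) auto
    finally have last_Z: "Z d0 \<le> Z' d0 + Z' (Suc d0)" .
    have Z'_nonneg: "Z' d0 \<ge> 0"
      unfolding Z'_def using nonneg_parts_nth[OF ok', of d0] len' a pos
      by (intro matvec_nonneg) (auto simp: less_imp_le)
    have sum_Z: "(\<Sum>q<Suc d0. (if q < p then c else 1) * Z q) =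
        (\<Sum>q<d0. (if q < p then c else 1) * Z' q) + Z d0"
      using p same_Z by simp
    have "p < Suc (Suc d0)" using p by simp
    with ineq a have "(\<Sum>q<Suc (Suc d0). (if q < p then c else 1) * Z' q) < c * ys' p a"
      unfolding Z'_def by blast
    hence lt1: "(\<Sum>q<Suc d0. (if q < p then c else 1) * Z q) < c * ys' p a"
      using sum_Z last_Z p by simp
    show "(\<Sum>q<Suc d0. (if q < p then c else 1) * matvec (C ! q) (ys q) a) < c * ys p a"
    proof (cases "p < d0")
      case True thus ?thesis using lt1 unfolding Z_def ys_def by simp
    next
      case False
      hence p: "p = d0" using p by simp
      have "1 * Z' d0 \<le> c * Z' d0" by (rule mult_right_mono[OF c Z'_nonneg])
      moreover have "(\<Sum>q<Suc (Suc d0). (if q < Suc d0 then c else 1) * Z' q) < c * ys' (Suc d0) a"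
        using ineq a unfolding Z'_def by blast
      ultimately have "(\<Sum>q<Suc d0. (if q < p then c else 1) * Z q) < c * ys' (Suc d0) a"
        using sum_Z last_Z p by simp
      thus ?thesis using lt1 p c unfolding Z_def ys_def by simp
    qed
  qed
qed

lemma iteration_spectral_radius_refine:
  assumes n: "n > 0" and ok: "nonneg_parts n C" and ok': "nonneg_parts n C'"
    and len: "length C = Suc d0" and len': "length C' = Suc (Suc d0)"
    and same: "\<forall>p<d0. C' ! p = C ! p"
    and last: "is_splitting n 2 (C ! d0) [C' ! d0, C' ! Suc d0]"
  defines "\<tau> \<equiv> real_spectral_radius (iteration_matrix n C)"
    and "\<tau>' \<equiv> real_spectral_radius (iteration_matrix n C')"
  shows "\<tau> < 1 \<Longrightarrow> \<tau>' \<le> \<tau>" and "1 \<le> \<tau> \<Longrightarrow> \<tau> \<le> \<tau>'"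
proof -
  have ne: "C \<noteq> []" "C' \<noteq> []" using len len' by auto
  have last': "matvec (C ! d0) y a = matvec (C' ! d0) y a + matvec (C' ! Suc d0) y a"
    if "a < n" for y a
    using matvec_splitting[OF last that] by (simp add: numeral_2_eq_2)
  note iff = iteration_spectral_radius_less_iff[OF n ok ne(1)]
    iteration_spectral_radius_less_iff[OF n ok' ne(2)]
  show "\<tau>' \<le> \<tau>" if "\<tau> < 1"
  proof (rule le_if_thresholds_below_one[OF _ that])
    show "0 \<le> \<tau>" unfolding \<tau>_def by (rule iteration_spectral_radius_nonneg[OF n ok ne(1)])
    fix c :: real assume "0 < c" "c \<le> 1" "\<tau> < c"
    thus "\<tau>' < c" using block_subinvariant_refine[OF ok' len len' same last'] iff
      unfolding \<tau>_def \<tau>'_def by blast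
  qed
  show "\<tau> \<le> \<tau>'" if "1 \<le> \<tau>"
  proof (rule le_if_thresholds_from_one[OF that])
    fix c :: real assume "1 \<le> c" "\<tau>' < c"
    thus "\<tau> < c" using block_subinvariant_coarsen[OF ok' len len' same last'] iff
      unfolding \<tau>_def \<tau>'_def by blast
  qed
qed

theorem theorem3p1:
  fixes n d r s :: nat and BJ :: "real mat" and Bs Bs' :: "real mat list"
  assumes n: "n > 0"
    and BJ: "BJ \<in> carrier_mat n n"
    and nonneg: "nonneg_mat BJ"
    and rho_pos: "real_spectral_radius BJ > 0"
    and d: "d \<ge> 1"
    and split: "is_splitting n d BJ Bs"
    and split': "is_splitting n (d + 1) BJ Bs'"
    and r: "r \<le> d - 1" and s: "s \<le> d"
    and I: "\<forall>p < d - 1. (cyc_shift ^^ s) Bs' ! p = (cyc_shift ^^ r) Bs ! p"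
    and II: "is_splitting n 2 ((cyc_shift ^^ r) Bs ! (d - 1))
               [(cyc_shift ^^ s) Bs' ! (d - 1), (cyc_shift ^^ s) Bs' ! d]"
  shows "(real_spectral_radius BJ < 1 \<longrightarrow>
            real_spectral_radius (iteration_matrix n Bs') \<le> real_spectral_radius (iteration_matrix n Bs) \<and>
            real_spectral_radius (iteration_matrix n Bs) \<le> real_spectral_radius BJ)
       \<and> (real_spectral_radius BJ = 1 \<longrightarrow>
            real_spectral_radius (iteration_matrix n Bs') = 1 \<and>
            real_spectral_radius (iteration_matrix n Bs) = 1)
       \<and> (real_spectral_radius BJ > 1 \<longrightarrow>
            real_spectral_radius (iteration_matrix n Bs') \<ge> real_spectral_radius (iteration_matrix n Bs) \<and>
            real_spectral_radius (iteration_matrix n Bs) \<ge> real_spectral_radius BJ)"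
proof -
  obtain d0 where d0: "d = Suc d0" using d by (cases d) auto
  have ok: "nonneg_parts n Bs" "nonneg_parts n Bs'"
    using splitting_nonneg_parts[OF split nonneg] splitting_nonneg_parts[OF split' nonneg] .
  have len: "length Bs = Suc d0" "length Bs' = Suc (Suc d0)"
    using split split' d0 unfolding is_splitting_def by auto
  have shift: "real_spectral_radius (iteration_matrix n ((cyc_shift ^^ r) Bs)) =
        real_spectral_radius (iteration_matrix n Bs)"
      "real_spectral_radius (iteration_matrix n ((cyc_shift ^^ s) Bs')) =
        real_spectral_radius (iteration_matrix n Bs')"
    using iteration_spectral_radius_cyc_shift_pow[OF n ok(1) _, of r]
      iteration_spectral_radius_cyc_shift_pow[OF n ok(2) _, of s] len r s d0
    by (simp_all flip: length_greater_0_conv)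
  note refine = iteration_spectral_radius_refine[OF n _ _ _ _
      I[unfolded d0 diff_Suc_1] II[unfolded d0 diff_Suc_1], unfolded shift]
  note cmp = splitting_iteration_spectral_radius[OF n BJ nonneg split]
    and cmp' = splitting_iteration_spectral_radius[OF n BJ nonneg split']
  show ?thesis using refine cmp cmp' ok len by (auto intro: order.trans)
qed

end
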